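(* Let $\boldsymbol{S}\in\mathrm{Mat}(M,M,\mathbb{C})$ be invertible, $\boldsymbol{U}\in\mathrm{Mat}(m,M,\mathbb{C})$, $\boldsymbol{V}\in\mathrm{Mat}(M,m,\mathbb{C})$, $\boldsymbol{T}\in\mathrm{Mat}(M,M,\mathbb{C})$ invertible, and suppose the Sylvester equation $\boldsymbol{S}\boldsymbol{K}+\boldsymbol{K}\boldsymbol{S}=\boldsymbol{V}\boldsymbol{U}$ has a solution. Let $\boldsymbol{\Xi}=e^{-\boldsymbol{S}x-\boldsymbol{S}^{-1}y}$ with $x,y$ real, and for a solution $\boldsymbol{K}$ and $p_0\in\mathrm{Mat}(m,m,\mathbb{C})$ define $$q=\boldsymbol{U}\boldsymbol{\Xi}\,(\boldsymbol{I}_M+(\boldsymbol{K}\boldsymbol{\Xi})^2)^{-1}\boldsymbol{V},\qquad p=p_0-\boldsymbol{U}\boldsymbol{\Xi}\boldsymbol{K}\boldsymbol{\Xi}\,(\boldsymbol{I}_M+(\boldsymbol{K}\boldsymbol{\Xi})^2)^{-1}\boldsymbol{V}$$ wherever the inverse exists. (1) If $\boldsymbol{T}^\dagger=\boldsymbol{T}$, $\boldsymbol{S}^\dagger=\boldsymbol{T}\boldsymbol{S}\boldsymbol{T}^{-1}$ and $\boldsymbol{U}=\boldsymbol{V}^\dagger\boldsymbol{T}$, then the Sylvester equation has a solution $\boldsymbol{K}$ with $\boldsymbol{K}^\dagger=\boldsymbol{T}\boldsymbol{K}\boldsymbol{T}^{-1}$, and for any such $\boldsymbol{K}$ and any Hermitian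 $p_0$, the matrices $q$ and $p$ are Hermitian ($q^\dagger=q$, $p^\dagger=p$), so that they solve the Hermitian reduction of the system $p_{xy}=(q^2)_y$, $q_{xy}=q-p_yq-qp_y$. (2) If $\bar{\boldsymbol{T}}=\boldsymbol{T}^{-1}$, $\bar{\boldsymbol{S}}=\boldsymbol{T}\boldsymbol{S}\boldsymbol{T}^{-1}$, $\bar{\boldsymbol{U}}=\boldsymbol{U}\boldsymbol{T}^{-1}$ and $\bar{\boldsymbol{V}}=\boldsymbol{T}\boldsymbol{V}$, then the Sylvester equation has a solution $\boldsymbol{K}$ with $\bar{\boldsymbol{K}}=\boldsymbol{T}\boldsymbol{K}\boldsymbol{T}^{-1}$, and for any such $\boldsymbol{K}$ and any real $p_0$ ($\bar p_0=p_0$), one has $\bar q=q$ and $\bar p=p$, so that $q,p$ solve the complex conjugation (real) reduction of the system $p_{xy}=(q^2)_y$, $q_{xy}=q-p_yq-qp_y$.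
   Context: ${}^\dagger$ denotes the conjugate transpose and a bar denotes entrywise complex conjugation; $\boldsymbol{I}_M$ is the $M\times M$ identity matrix; $e^{(\cdot)}$ is the matrix exponential; subscripts denote partial derivatives. *)

theory Defs
  imports "HOL-Analysis.Analysis"
begin

text \<open>Matrices are rendered as complex^'c^'r (r rows, c columns); ** is the matrix product.\<close>

primrec mat_pow :: "complex^'n^'n \<Rightarrow> nat \<Rightarrow> complex^'n^'n" where
  "mat_pow A 0 = mat 1"
| "mat_pow A (Suc k) = A ** mat_pow A k"

definition mat_exp :: "complex^'n^'n \<Rightarrow> complex^'n^'n" where
  "mat_exp A = (\<Sum>k. (1 / fact k) *\<^sub>R mat_pow A k)"

definition mconj :: "complex^'c^'r \<Rightarrow> complex^'c^'r" where
  "mconj A = map_matrix cnj A"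

definition adjoint :: "complex^'c^'r \<Rightarrow> complex^'r^'c" where
  "adjoint A = transpose (map_matrix cnj A)"

definition Xi :: "complex^'M^'M \<Rightarrow> real \<Rightarrow> real \<Rightarrow> complex^'M^'M" where
  "Xi S x y = mat_exp (- (x *\<^sub>R S) - (y *\<^sub>R matrix_inv S))"

definition qsol :: "complex^'M^'M \<Rightarrow> complex^'M^'m \<Rightarrow> complex^'m^'M \<Rightarrow> complex^'M^'M
    \<Rightarrow> real \<Rightarrow> real \<Rightarrow> complex^'m^'m" where
  "qsol S U V K x y =
     U ** Xi S x y ** matrix_inv (mat 1 + (K ** Xi S x y) ** (K ** Xi S x y)) ** V"

definition psol :: "complex^'m^'m \<Rightarrow> complex^'M^'M \<Rightarrow> complex^'M^'m \<Rightarrow> complex^'m^'M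
    \<Rightarrow> complex^'M^'M \<Rightarrow> real \<Rightarrow> real \<Rightarrow> complex^'m^'m" where
  "psol p0 S U V K x y =
     p0 - U ** Xi S x y ** K ** Xi S x y
        ** matrix_inv (mat 1 + (K ** Xi S x y) ** (K ** Xi S x y)) ** V"

end

theory Submission
  imports Defs
begin

text \<open>
  Both reductions come from an involution of matrix space (the conjugate transpose, resp. entrywise
  conjugation) that acts on \<open>S\<close>, and hence on \<open>\<Xi>\<close>, as conjugation by \<open>T\<close>. Averaging a
  solution of the Sylvester equation with its image under the involution gives a solution fixed
  by it. Entrywise conjugation is multiplicative, so the fixed matrices form an algebra and the
  claims for \<open>q\<close> and \<open>p\<close> are immediate. The conjugate transpose reverses products; the
  claims still hold because \<open>K\<Xi>K\<close> and \<open>\<Xi>K\<Xi>\<close> are palindromes and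
  \<open>(I + BA)\<^sup>-\<^sup>1B = B(I + AB)\<^sup>-\<^sup>1\<close> moves \<open>\<Xi>\<close> through the inverse.
\<close>

lemma matrix_add_rdistrib: "(A + B) ** C = A ** C + B ** (C :: 'a::semiring_1^'n^'k)"
  by (simp add: matrix_matrix_mult_def vec_eq_iff distrib_right sum.distrib)

lemma matrix_diff_ldistrib: "A ** (B - C) = A ** B - A ** (C :: 'a::ring_1^'n^'k)"
  by (simp add: matrix_matrix_mult_def vec_eq_iff right_diff_distrib sum_subtractf)

lemma matrix_inv_right:
  fixes A :: "'a::field^'n^'n"
  assumes "invertible A"
  shows "A ** matrix_inv A = mat 1"
  using someI_ex[OF assms[unfolded invertible_def]] unfolding matrix_inv_def by auto

lemma matrix_inv_left:
  fixes A :: "'a::field^'n^'n"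
  assumes "invertible A"
  shows "matrix_inv A ** A = mat 1"
  using someI_ex[OF assms[unfolded invertible_def]] unfolding matrix_inv_def by auto

lemma matrix_inv_cancel [simp]:
  fixes A :: "'a::field^'n^'n"
  assumes "invertible A"
  shows "X ** A ** matrix_inv A = X" "X ** matrix_inv A ** A = X"
  by (simp_all add: assms matrix_inv_left matrix_inv_right flip: matrix_mul_assoc)

lemma matrix_inv_unique:
  fixes A B :: "'a::field^'n^'n"
  assumes "B ** A = mat 1"
  shows "matrix_inv A = B"
proof -
  have "invertible A" using assms invertible_left_inverse by blast
  then have "B = B ** A ** matrix_inv A" by simp
  then show ?thesis by (simp add: assms)
qed

lemma matrix_inv_similar:
  fixes A T :: "'a::field^'n^'n"
  assumes "invertible T" "invertible A"
  shows "matrix_inv (T ** A ** matrix_inv T) = T ** matrix_inv A ** matrix_inv T"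
proof (rule matrix_inv_unique)
  have "T ** matrix_inv A ** matrix_inv T ** (T ** A ** matrix_inv T)
      = T ** (matrix_inv A ** A) ** matrix_inv T"
    using assms(1) by (simp add: matrix_mul_assoc)
  then show "T ** matrix_inv A ** matrix_inv T ** (T ** A ** matrix_inv T) = mat 1"
    using assms by (simp add: matrix_inv_left matrix_inv_right)
qed

lemma invertible_one_plus_commute:
  fixes A :: "'a::field^'n^'k" and B :: "'a^'k^'n"
  assumes "invertible (mat 1 + A ** B)"
  shows "invertible (mat 1 + B ** A)"
proof -
  define W where "W = matrix_inv (mat 1 + A ** B)"
  have "(mat 1 + B ** A) ** (mat 1 - B ** W ** A)
      = mat 1 + B ** A - B ** ((mat 1 + A ** B) ** W) ** A"
    by (simp add: matrix_add_ldistrib matrix_add_rdistrib matrix_diff_ldistrib matrix_mul_assoc)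
  also have "\<dots> = mat 1"
    using assms by (simp add: W_def matrix_inv_right)
  finally show ?thesis using invertible_right_inverse by blast
qed

lemma matrix_inv_push_through:
  fixes A :: "'a::field^'n^'k" and B :: "'a^'k^'n"
  assumes "invertible (mat 1 + A ** B)"
  shows "matrix_inv (mat 1 + B ** A) ** B = B ** matrix_inv (mat 1 + A ** B)"
proof -
  have BA: "invertible (mat 1 + B ** A)" by (rule invertible_one_plus_commute[OF assms])
  have "matrix_inv (mat 1 + B ** A) ** B
      = matrix_inv (mat 1 + B ** A) ** (B ** (mat 1 + A ** B)) ** matrix_inv (mat 1 + A ** B)"
    using assms by (simp add: matrix_mul_assoc)
  also have "B ** (mat 1 + A ** B) = (mat 1 + B ** A) ** B"
    by (simp add: matrix_add_ldistrib matrix_add_rdistrib matrix_mul_assoc)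
  finally show ?thesis
    using BA by (simp add: matrix_mul_assoc matrix_inv_left)
qed

lemma mconj_mult: "mconj (A ** B) = mconj A ** mconj (B :: complex^'n^'k)"
  by (simp add: mconj_def vec_eq_iff matrix_matrix_mult_def)

lemma mconj_add: "mconj (A + B) = mconj A + mconj B"
  by (simp add: mconj_def vec_eq_iff)

lemma mconj_diff: "mconj (A - B) = mconj A - mconj B"
  by (simp add: mconj_def vec_eq_iff)

lemma mconj_uminus: "mconj (- A) = - mconj A"
  by (simp add: mconj_def vec_eq_iff)

lemma mconj_scaleR: "mconj (r *\<^sub>R A) = r *\<^sub>R mconj A"
  by (simp add: mconj_def vec_eq_iff)

lemma mconj_mat_1: "mconj (mat 1) = mat 1"
  by (simp add: mconj_def vec_eq_iff mat_def)

lemma mconj_mconj: "mconj (mconj A) = A"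
  by (simp add: mconj_def vec_eq_iff)

lemma linear_mconj: "linear mconj"
  by (rule linearI) (simp_all add: mconj_add mconj_scaleR)

lemma mconj_matrix_inv:
  fixes A :: "complex^'n^'n"
  assumes "invertible A"
  shows "mconj (matrix_inv A) = matrix_inv (mconj A)"
  by (rule matrix_inv_unique[symmetric])
     (simp add: assms matrix_inv_left mconj_mat_1 flip: mconj_mult)

lemma adjoint_eq_transpose_mconj: "adjoint A = transpose (mconj A)"
  by (simp add: adjoint_def mconj_def)

lemma transpose_add: "transpose (A + B) = transpose A + transpose B"
  by (simp add: transpose_def vec_eq_iff)

lemma adjoint_mult: "adjoint (A ** B) = adjoint B ** adjoint (A :: complex^'n^'k)"
  by (simp add: adjoint_eq_transpose_mconj mconj_mult matrix_transpose_mul)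

lemma adjoint_add: "adjoint (A + B) = adjoint A + adjoint B"
  by (simp add: adjoint_eq_transpose_mconj mconj_add transpose_add)

lemma adjoint_diff: "adjoint (A - B) = adjoint A - adjoint B"
  by (simp add: adjoint_def transpose_def vec_eq_iff)

lemma adjoint_uminus: "adjoint (- A) = - adjoint A"
  by (simp add: adjoint_def transpose_def vec_eq_iff)

lemma adjoint_scaleR: "adjoint (r *\<^sub>R A) = r *\<^sub>R adjoint A"
  by (simp add: adjoint_eq_transpose_mconj mconj_scaleR transpose_scalar)

lemma adjoint_mat_1: "adjoint (mat 1) = mat 1"
  by (simp add: adjoint_eq_transpose_mconj mconj_mat_1)

lemma adjoint_adjoint: "adjoint (adjoint A) = A"
  by (simp add: adjoint_def transpose_def vec_eq_iff)

lemma linear_adjoint: "linear adjoint"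
  by (rule linearI) (simp_all add: adjoint_add adjoint_scaleR)

lemma adjoint_matrix_inv:
  fixes A :: "complex^'n^'n"
  assumes "invertible A"
  shows "adjoint (matrix_inv A) = matrix_inv (adjoint A)"
  by (rule matrix_inv_unique[symmetric])
     (simp add: assms matrix_inv_right adjoint_mat_1 flip: adjoint_mult)

lemma mat_pow_commute: "mat_pow A k ** A = A ** mat_pow A k"
  by (induction k) (simp_all flip: matrix_mul_assoc)

lemma mconj_mat_pow: "mconj (mat_pow A k) = mat_pow (mconj A) k"
  by (induction k) (simp_all add: mconj_mult mconj_mat_1)

lemma transpose_mat_pow: "transpose (mat_pow A k) = mat_pow (transpose A) k"
  by (induction k) (simp_all add: matrix_transpose_mul flip: mat_pow_commute)

lemma mat_pow_similar:
  fixes A T :: "complex^'n^'n"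
  assumes "invertible T"
  shows "mat_pow (T ** A ** matrix_inv T) k = T ** mat_pow A k ** matrix_inv T"
proof (induction k)
  case 0
  then show ?case using assms by (simp add: matrix_inv_right)
next
  case (Suc k)
  have "T ** A ** matrix_inv T ** (T ** mat_pow A k ** matrix_inv T)
      = T ** A ** mat_pow A k ** matrix_inv T"
    using assms by (simp add: matrix_mul_assoc)
  with Suc show ?case by (simp add: matrix_mul_assoc)
qed

text \<open>The Euclidean norm on matrices is not known to the library to be submultiplicative; the
  entrywise \<open>\<ell>\<^sub>1\<close> norm is, and it dominates the Euclidean norm, which bounds the
  exponential series.\<close>

definition matrix_l1norm :: "complex^'n^'m \<Rightarrow> real" where
  "matrix_l1norm A = (\<Sum>i\<in>UNIV. \<Sum>j\<in>UNIV. norm (A$i$j))"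

lemma matrix_l1norm_nonneg: "0 \<le> matrix_l1norm A"
  unfolding matrix_l1norm_def by (intro sum_nonneg) auto

lemma norm_vec_le_sum: "norm (x :: 'a::real_normed_vector^'n) \<le> (\<Sum>i\<in>UNIV. norm (x$i))"
  unfolding norm_vec_def by (rule L2_set_le_sum) auto

lemma norm_le_matrix_l1norm: "norm A \<le> matrix_l1norm A"
proof -
  have "norm A \<le> (\<Sum>i\<in>UNIV. norm (A$i))" by (rule norm_vec_le_sum)
  also have "\<dots> \<le> matrix_l1norm A"
    unfolding matrix_l1norm_def by (intro sum_mono norm_vec_le_sum)
  finally show ?thesis .
qed

lemma matrix_l1norm_mult: "matrix_l1norm (A ** B) \<le> matrix_l1norm A * matrix_l1norm B"
proof -
  have "matrix_l1norm (A ** B) \<le> (\<Sum>i\<in>UNIV. \<Sum>j\<in>UNIV. \<Sum>k\<in>UNIV. norm (A$i$k) * norm (B$k$j))"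
    unfolding matrix_l1norm_def matrix_matrix_mult_def
    by (intro sum_mono) (auto intro: order_trans[OF norm_sum] simp: norm_mult)
  also have "\<dots> = (\<Sum>i\<in>UNIV. \<Sum>k\<in>UNIV. \<Sum>j\<in>UNIV. norm (A$i$k) * norm (B$k$j))"
    by (rule sum.cong[OF refl], rule sum.swap)
  also have "\<dots> = (\<Sum>i\<in>UNIV. \<Sum>k\<in>UNIV. norm (A$i$k) * (\<Sum>j\<in>UNIV. norm (B$k$j)))"
    by (simp add: sum_distrib_left)
  also have "\<dots> \<le> (\<Sum>i\<in>UNIV. \<Sum>k\<in>UNIV. norm (A$i$k) * matrix_l1norm B)"
    unfolding matrix_l1norm_def
    by (intro sum_mono mult_left_mono member_le_sum) (auto intro: sum_nonneg)
  also have "\<dots> = matrix_l1norm A * matrix_l1norm B"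
    unfolding matrix_l1norm_def by (simp add: sum_distrib_right)
  finally show ?thesis .
qed

lemma matrix_l1norm_mat_pow:
  fixes A :: "complex^'n^'n"
  shows "matrix_l1norm (mat_pow A k) \<le> matrix_l1norm (mat 1 :: complex^'n^'n) * matrix_l1norm A ^ k"
proof (induction k)
  case (Suc k)
  have "matrix_l1norm (mat_pow A (Suc k)) \<le> matrix_l1norm A * matrix_l1norm (mat_pow A k)"
    using matrix_l1norm_mult by simp
  also have "\<dots> \<le> matrix_l1norm A * (matrix_l1norm (mat 1 :: complex^'n^'n) * matrix_l1norm A ^ k)"
    by (intro mult_left_mono Suc matrix_l1norm_nonneg)
  finally show ?case by (simp add: algebra_simps)
qed simp

lemma summable_mat_exp: "summable (\<lambda>k. (1 / fact k) *\<^sub>R mat_pow (A :: complex^'n^'n) k)"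
proof (rule summable_comparison_test)
  let ?c = "matrix_l1norm (mat 1 :: complex^'n^'n)"
  show "summable (\<lambda>k. ?c * (inverse (fact k) * matrix_l1norm A ^ k))"
    by (intro summable_mult summable_exp)
  have "norm ((1 / fact k) *\<^sub>R mat_pow A k) \<le> ?c * (inverse (fact k) * matrix_l1norm A ^ k)" for k
  proof -
    have "norm ((1 / fact k) *\<^sub>R mat_pow A k) = inverse (fact k) * norm (mat_pow A k)"
      by (simp add: divide_inverse)
    also have "\<dots> \<le> inverse (fact k) * (?c * matrix_l1norm A ^ k)"
      by (intro mult_left_mono order_trans[OF norm_le_matrix_l1norm matrix_l1norm_mat_pow]) auto
    finally show ?thesis by (simp add: algebra_simps)
  qed
  then show "\<exists>N. \<forall>k\<ge>N. norm ((1 / fact k) *\<^sub>R mat_pow A k)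
      \<le> ?c * (inverse (fact k) * matrix_l1norm A ^ k)"
    by blast
qed

lemma linear_mat_exp_eq:
  fixes f :: "complex^'n^'n \<Rightarrow> complex^'m^'m"
  assumes "linear f" and "\<And>k. f (mat_pow A k) = mat_pow B k"
  shows "f (mat_exp A) = mat_exp B"
proof -
  have "bounded_linear f" using assms(1) linear_conv_bounded_linear by blast
  then have "f (mat_exp A) = (\<Sum>k. f ((1 / fact k) *\<^sub>R mat_pow A k))"
    unfolding mat_exp_def by (rule bounded_linear.suminf[OF _ summable_mat_exp])
  then show ?thesis
    unfolding mat_exp_def by (simp add: linear_scale[OF assms(1)] assms(2))
qed

lemma mconj_mat_exp: "mconj (mat_exp A) = mat_exp (mconj A)"
  by (rule linear_mat_exp_eq[OF linear_mconj mconj_mat_pow])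

lemma adjoint_mat_exp: "adjoint (mat_exp A) = mat_exp (adjoint A)"
proof -
  have "linear (\<lambda>A :: complex^'n^'n. adjoint A)" by (rule linear_adjoint)
  moreover have "adjoint (mat_pow A k) = mat_pow (adjoint A) k" for k
    by (simp add: adjoint_eq_transpose_mconj mconj_mat_pow transpose_mat_pow)
  ultimately show ?thesis by (rule linear_mat_exp_eq)
qed

lemma linear_similar: "linear (\<lambda>A. T ** A ** (Ti :: 'a::real_algebra_1^'n^'n))"
  by (rule linearI)
     (simp_all add: matrix_add_ldistrib matrix_add_rdistrib scalar_matrix_assoc matrix_scalar_ac)

lemma mat_exp_similar:
  fixes A T :: "complex^'n^'n"
  assumes "invertible T"
  shows "mat_exp (T ** A ** matrix_inv T) = T ** mat_exp A ** matrix_inv T"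
  by (rule linear_mat_exp_eq[OF linear_similar, symmetric]) (rule mat_pow_similar[OF assms, symmetric])

lemma mconj_Xi:
  assumes "invertible S"
  shows "mconj (Xi S x y) = Xi (mconj S) x y"
  unfolding Xi_def
  by (simp add: mconj_mat_exp mconj_diff mconj_uminus mconj_scaleR mconj_matrix_inv[OF assms])

lemma adjoint_Xi:
  assumes "invertible S"
  shows "adjoint (Xi S x y) = Xi (adjoint S) x y"
  unfolding Xi_def
  by (simp add: adjoint_mat_exp adjoint_diff adjoint_uminus adjoint_scaleR adjoint_matrix_inv[OF assms])

lemma Xi_similar:
  fixes S T :: "complex^'n^'n"
  assumes "invertible T" "invertible S"
  shows "Xi (T ** S ** matrix_inv T) x y = T ** Xi S x y ** matrix_inv T"
proof -
  note similar = linear_similar[of T "matrix_inv T"]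
  have "- (x *\<^sub>R (T ** S ** matrix_inv T)) - y *\<^sub>R matrix_inv (T ** S ** matrix_inv T)
      = T ** (- (x *\<^sub>R S) - y *\<^sub>R matrix_inv S) ** matrix_inv T"
    by (simp add: assms matrix_inv_similar linear_diff[OF similar] linear_neg[OF similar]
        linear_scale[OF similar])
  then show ?thesis
    unfolding Xi_def by (simp add: mat_exp_similar[OF assms(1)])
qed

lemma linear_involution_fixed_solution:
  fixes f :: "'a::real_vector \<Rightarrow> 'b::real_vector"
  assumes "linear f" "linear \<sigma>" "\<And>x. \<sigma> (\<sigma> x) = x"
    and "f x0 = c" "\<And>x. f x = c \<Longrightarrow> f (\<sigma> x) = c"
  shows "\<exists>x. f x = c \<and> \<sigma> x = x"
proof (intro exI conjI)
  let ?x = "(1/2) *\<^sub>R (x0 + \<sigma> x0)"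
  show "f ?x = c"
    using assms by (simp add: linear_scale linear_add flip: scaleR_2)
  show "\<sigma> ?x = ?x"
    using assms by (simp add: linear_scale linear_add add.commute)
qed

lemma linear_sylvester: "linear (\<lambda>K. S ** K + K ** (S :: 'a::real_algebra_1^'n^'n))"
  by (rule linearI)
     (simp_all add: matrix_add_ldistrib matrix_add_rdistrib scalar_matrix_assoc matrix_scalar_ac
       scaleR_add_right)

lemma sylvester_adjoint_fixed_solution:
  fixes S T K0 :: "complex^'M^'M" and U :: "complex^'M^'m" and V :: "complex^'m^'M"
  assumes T: "invertible T" "adjoint T = T"
    and S: "adjoint S = T ** S ** matrix_inv T"
    and UV: "adjoint U = T ** V" "adjoint V = U ** matrix_inv T"
    and K0: "S ** K0 + K0 ** S = V ** U"
  shows "\<exists>K. S ** K + K ** S = V ** U \<and> adjoint K = T ** K ** matrix_inv T"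
proof -
  define \<sigma> where "\<sigma> K = matrix_inv T ** adjoint K ** T" for K :: "complex^'M^'M"
  have Ti: "adjoint (matrix_inv T) = matrix_inv T"
    using T by (simp add: adjoint_matrix_inv)
  have "linear \<sigma>"
    unfolding \<sigma>_def by (rule linear_compose[OF linear_adjoint linear_similar, unfolded o_def])
  moreover have "\<sigma> (\<sigma> K) = K" for K
    using T by (simp add: \<sigma>_def adjoint_mult adjoint_adjoint Ti matrix_mul_assoc matrix_inv_left)
  moreover have "S ** \<sigma> K + \<sigma> K ** S = V ** U" if "S ** K + K ** S = V ** U" for K
  proof -
    have "matrix_inv T ** adjoint (S ** K + K ** S) ** T = matrix_inv T ** adjoint (V ** U) ** T"
      using that by simp
    then show ?thesis
      using T by (simp add: \<sigma>_def adjoint_add adjoint_mult S UV matrix_add_ldistrib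
          matrix_add_rdistrib matrix_mul_assoc matrix_inv_left add.commute)
  qed
  ultimately obtain K where K: "S ** K + K ** S = V ** U" "\<sigma> K = K"
    using linear_involution_fixed_solution[OF linear_sylvester] K0 by metis
  have "adjoint K = T ** \<sigma> K ** matrix_inv T"
    using T by (simp add: \<sigma>_def matrix_mul_assoc matrix_inv_right)
  with K show ?thesis by auto
qed

lemma sylvester_mconj_fixed_solution:
  fixes S T K0 :: "complex^'M^'M" and U :: "complex^'M^'m" and V :: "complex^'m^'M"
  assumes T: "invertible T" "mconj T = matrix_inv T"
    and S: "mconj S = T ** S ** matrix_inv T"
    and UV: "mconj U = U ** matrix_inv T" "mconj V = T ** V"
    and K0: "S ** K0 + K0 ** S = V ** U"
  shows "\<exists>K. S ** K + K ** S = V ** U \<and> mconj K = T ** K ** matrix_inv T"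
proof -
  define \<sigma> where "\<sigma> K = matrix_inv T ** mconj K ** T" for K :: "complex^'M^'M"
  have Ti: "mconj (matrix_inv T) = T"
    using T(2) mconj_mconj by metis
  have "linear \<sigma>"
    unfolding \<sigma>_def by (rule linear_compose[OF linear_mconj linear_similar, unfolded o_def])
  moreover have "\<sigma> (\<sigma> K) = K" for K
    using T by (simp add: \<sigma>_def mconj_mult mconj_mconj Ti matrix_mul_assoc matrix_inv_left)
  moreover have "S ** \<sigma> K + \<sigma> K ** S = V ** U" if "S ** K + K ** S = V ** U" for K
  proof -
    have "matrix_inv T ** mconj (S ** K + K ** S) ** T = matrix_inv T ** mconj (V ** U) ** T"
      using that by simp
    then show ?thesis
      using T by (simp add: \<sigma>_def mconj_add mconj_mult S UV matrix_add_ldistrib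
          matrix_add_rdistrib matrix_mul_assoc matrix_inv_left)
  qed
  ultimately obtain K where K: "S ** K + K ** S = V ** U" "\<sigma> K = K"
    using linear_involution_fixed_solution[OF linear_sylvester] K0 by metis
  have "mconj K = T ** \<sigma> K ** matrix_inv T"
    using T by (simp add: \<sigma>_def matrix_mul_assoc matrix_inv_right)
  with K show ?thesis by auto
qed

lemma adjoint_matrix_inv_one_plus:
  fixes A B T :: "complex^'n^'n"
  assumes T: "invertible T"
    and A: "adjoint A = T ** A ** matrix_inv T" and B: "adjoint B = T ** B ** matrix_inv T"
    and AB: "invertible (mat 1 + A ** B)"
  shows "adjoint (matrix_inv (mat 1 + A ** B)) = T ** matrix_inv (mat 1 + B ** A) ** matrix_inv T"
proof -
  have "adjoint (mat 1 + A ** B) = T ** (mat 1 + B ** A) ** matrix_inv T"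
    using T by (simp add: adjoint_add adjoint_mult adjoint_mat_1 A B matrix_add_ldistrib
        matrix_add_rdistrib matrix_mul_assoc matrix_inv_right)
  then show ?thesis
    using T invertible_one_plus_commute[OF AB]
    by (simp add: adjoint_matrix_inv[OF AB] matrix_inv_similar)
qed

lemma adjoint_qsol_psol:
  fixes S T K :: "complex^'M^'M" and U :: "complex^'M^'m" and V :: "complex^'m^'M"
    and p0 :: "complex^'m^'m"
  assumes T: "invertible T"
    and Xi: "adjoint (Xi S x y) = T ** Xi S x y ** matrix_inv T"
    and K: "adjoint K = T ** K ** matrix_inv T"
    and UV: "adjoint U = T ** V" "adjoint V = U ** matrix_inv T"
    and p0: "adjoint p0 = p0"
    and inv: "invertible (mat 1 + (K ** Xi S x y) ** (K ** Xi S x y))"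
  shows "adjoint (qsol S U V K x y) = qsol S U V K x y"
    and "adjoint (psol p0 S U V K x y) = psol p0 S U V K x y"
proof -
  let ?X = "Xi S x y"
  let ?W = "matrix_inv (mat 1 + K ** ?X ** K ** ?X)"
  have "adjoint (qsol S U V K x y) = U ** (matrix_inv (mat 1 + ?X ** (K ** ?X ** K)) ** ?X) ** V"
    using T inv adjoint_matrix_inv_one_plus[OF T _ Xi, of "K ** ?X ** K"]
    by (simp add: qsol_def adjoint_mult K Xi UV matrix_mul_assoc)
  also have "matrix_inv (mat 1 + ?X ** (K ** ?X ** K)) ** ?X = ?X ** ?W"
    using matrix_inv_push_through[of "K ** ?X ** K" ?X] inv by (simp add: matrix_mul_assoc)
  finally show "adjoint (qsol S U V K x y) = qsol S U V K x y"
    by (simp add: qsol_def matrix_mul_assoc)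
  have "adjoint (U ** ?X ** K ** ?X ** ?W ** V)
      = U ** (matrix_inv (mat 1 + ?X ** K ** ?X ** K) ** (?X ** K ** ?X)) ** V"
    using T inv adjoint_matrix_inv_one_plus[OF T K, of "?X ** K ** ?X"]
    by (simp add: adjoint_mult K Xi UV matrix_mul_assoc)
  also have "matrix_inv (mat 1 + ?X ** K ** ?X ** K) ** (?X ** K ** ?X) = ?X ** K ** ?X ** ?W"
    using matrix_inv_push_through[of K "?X ** K ** ?X"] inv by (simp add: matrix_mul_assoc)
  finally show "adjoint (psol p0 S U V K x y) = psol p0 S U V K x y"
    by (simp add: psol_def adjoint_diff p0 matrix_mul_assoc)
qed

lemma mconj_qsol_psol:
  fixes S T K :: "complex^'M^'M" and U :: "complex^'M^'m" and V :: "complex^'m^'M"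
    and p0 :: "complex^'m^'m"
  assumes T: "invertible T"
    and Xi: "mconj (Xi S x y) = T ** Xi S x y ** matrix_inv T"
    and K: "mconj K = T ** K ** matrix_inv T"
    and UV: "mconj U = U ** matrix_inv T" "mconj V = T ** V"
    and p0: "mconj p0 = p0"
    and inv: "invertible (mat 1 + (K ** Xi S x y) ** (K ** Xi S x y))"
  shows "mconj (qsol S U V K x y) = qsol S U V K x y"
    and "mconj (psol p0 S U V K x y) = psol p0 S U V K x y"
proof -
  let ?M = "mat 1 + K ** Xi S x y ** K ** Xi S x y"
  have "mconj ?M = T ** ?M ** matrix_inv T"
    using T by (simp add: mconj_add mconj_mult mconj_mat_1 K Xi matrix_add_ldistrib
        matrix_add_rdistrib matrix_mul_assoc matrix_inv_right)
  then have W: "mconj (matrix_inv ?M) = T ** matrix_inv ?M ** matrix_inv T"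
    using T inv by (simp add: mconj_matrix_inv matrix_inv_similar matrix_mul_assoc)
  show "mconj (qsol S U V K x y) = qsol S U V K x y"
    using T by (simp add: qsol_def mconj_mult Xi W UV matrix_mul_assoc)
  show "mconj (psol p0 S U V K x y) = psol p0 S U V K x y"
    using T by (simp add: psol_def mconj_diff mconj_mult Xi K W UV p0 matrix_mul_assoc)
qed

lemma hermitian_reduction:
  fixes S T K0 :: "complex^'M^'M" and U :: "complex^'M^'m" and V :: "complex^'m^'M"
  assumes S_inv: "invertible S" and T_inv: "invertible T"
    and K0: "S ** K0 + K0 ** S = V ** U"
    and T: "adjoint T = T" and S: "adjoint S = T ** S ** matrix_inv T"
    and U: "U = adjoint V ** T"
  shows "\<exists>K. S ** K + K ** S = V ** U \<and> adjoint K = T ** K ** matrix_inv T"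
    and "adjoint K = T ** K ** matrix_inv T \<Longrightarrow> adjoint p0 = p0 \<Longrightarrow>
      invertible (mat 1 + (K ** Xi S x y) ** (K ** Xi S x y)) \<Longrightarrow>
      adjoint (qsol S U V K x y) = qsol S U V K x y \<and>
      adjoint (psol p0 S U V K x y) = psol p0 S U V K x y"
proof -
  have UV: "adjoint U = T ** V" "adjoint V = U ** matrix_inv T"
    using T_inv by (simp_all add: U T adjoint_mult adjoint_adjoint)
  show "\<exists>K. S ** K + K ** S = V ** U \<and> adjoint K = T ** K ** matrix_inv T"
    by (rule sylvester_adjoint_fixed_solution[OF T_inv T S UV K0])
  have "adjoint (Xi S x y) = T ** Xi S x y ** matrix_inv T"
    using S_inv T_inv by (simp add: adjoint_Xi S Xi_similar)
  then show "adjoint K = T ** K ** matrix_inv T \<Longrightarrow> adjoint p0 = p0 \<Longrightarrow>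
      invertible (mat 1 + (K ** Xi S x y) ** (K ** Xi S x y)) \<Longrightarrow>
      adjoint (qsol S U V K x y) = qsol S U V K x y \<and>
      adjoint (psol p0 S U V K x y) = psol p0 S U V K x y"
    using adjoint_qsol_psol[OF T_inv _ _ UV] by blast
qed

lemma real_reduction:
  fixes S T K0 :: "complex^'M^'M" and U :: "complex^'M^'m" and V :: "complex^'m^'M"
  assumes S_inv: "invertible S" and T_inv: "invertible T"
    and K0: "S ** K0 + K0 ** S = V ** U"
    and T: "mconj T = matrix_inv T" and S: "mconj S = T ** S ** matrix_inv T"
    and UV: "mconj U = U ** matrix_inv T" "mconj V = T ** V"
  shows "\<exists>K. S ** K + K ** S = V ** U \<and> mconj K = T ** K ** matrix_inv T"
    and "mconj K = T ** K ** matrix_inv T \<Longrightarrow> mconj p0 = p0 \<Longrightarrow>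
      invertible (mat 1 + (K ** Xi S x y) ** (K ** Xi S x y)) \<Longrightarrow>
      mconj (qsol S U V K x y) = qsol S U V K x y \<and>
      mconj (psol p0 S U V K x y) = psol p0 S U V K x y"
proof -
  show "\<exists>K. S ** K + K ** S = V ** U \<and> mconj K = T ** K ** matrix_inv T"
    by (rule sylvester_mconj_fixed_solution[OF T_inv T S UV K0])
  have "mconj (Xi S x y) = T ** Xi S x y ** matrix_inv T"
    using S_inv T_inv by (simp add: mconj_Xi S Xi_similar)
  then show "mconj K = T ** K ** matrix_inv T \<Longrightarrow> mconj p0 = p0 \<Longrightarrow>
      invertible (mat 1 + (K ** Xi S x y) ** (K ** Xi S x y)) \<Longrightarrow>
      mconj (qsol S U V K x y) = qsol S U V K x y \<and>
      mconj (psol p0 S U V K x y) = psol p0 S U V K x y"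
    using mconj_qsol_psol[OF T_inv _ _ UV] by blast
qed

theorem proposition2:
  fixes S T :: "complex^'M^'M" and U :: "complex^'M^'m" and V :: "complex^'m^'M"
  assumes S_inv: "invertible S"
    and T_inv: "invertible T"
    and sylv: "\<exists>K. S ** K + K ** S = V ** U"
  shows
   "(adjoint T = T \<and> adjoint S = T ** S ** matrix_inv T \<and> U = adjoint V ** T \<longrightarrow>
      (\<exists>K. S ** K + K ** S = V ** U \<and> adjoint K = T ** K ** matrix_inv T) \<and>
      (\<forall>K (p0 :: complex^'m^'m) x y.
         S ** K + K ** S = V ** U \<and> adjoint K = T ** K ** matrix_inv T \<and> adjoint p0 = p0 \<and>
         invertible (mat 1 + (K ** Xi S x y) ** (K ** Xi S x y)) \<longrightarrow>
           adjoint (qsol S U V K x y) = qsol S U V K x y \<and>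
           adjoint (psol p0 S U V K x y) = psol p0 S U V K x y))
    \<and>
    (mconj T = matrix_inv T \<and> mconj S = T ** S ** matrix_inv T \<and>
     mconj U = U ** matrix_inv T \<and> mconj V = T ** V \<longrightarrow>
      (\<exists>K. S ** K + K ** S = V ** U \<and> mconj K = T ** K ** matrix_inv T) \<and>
      (\<forall>K (p0 :: complex^'m^'m) x y.
         S ** K + K ** S = V ** U \<and> mconj K = T ** K ** matrix_inv T \<and> mconj p0 = p0 \<and>
         invertible (mat 1 + (K ** Xi S x y) ** (K ** Xi S x y)) \<longrightarrow>
           mconj (qsol S U V K x y) = qsol S U V K x y \<and>
           mconj (psol p0 S U V K x y) = psol p0 S U V K x y))"
proof -
  obtain K0 where K0: "S ** K0 + K0 ** S = V ** U" using sylv by blast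
  show ?thesis
    using hermitian_reduction[OF S_inv T_inv K0] real_reduction[OF S_inv T_inv K0] by blast
qed

end
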